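(* Let $q$ be a positive integer, $N< \sqrt{q}$ and $x = \frac{\phi(q)}{N}$. Let $r$ be a completely multiplicative function with $r(p) \geq 0$ for all primes $p$ and $r(p)=0$ whenever $p\mid q$. Set \[ B = \frac{\sum_{n = 1}^\infty r(n)^2}{\sum_{n \leq x/N} r(n)^2}.\] Then \[\Delta(N,q) \geq O(1) + \frac{1}{B} \sum_{n \leq N} r(n),\] where $O(1)$ denotes a quantity bounded in absolute value by an absolute constant. Furthermore, let $M$ be minimal such that $\sum_{p \leq M} \log p > \log q$ (sum over primes). The same bound remains valid if the hypothesis "$p \mid q \Rightarrow r(p) = 0$" is replaced by "$p\leq M \Rightarrow r(p) = 0$".
   Context: $\phi$ is Euler's totient function. For a positive integer $q$ and real $N\ge 1$, $\Delta(N,q) = \sup_{\chi \neq \chi_0 \bmod q} \left| \sum_{n \leq N}\chi(n)\right|$, the supremum over non-principal Dirichlet characters $\chi$ modulo $q$. *)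

theory Defs
  imports "HOL-Analysis.Analysis" "HOL-Number_Theory.Number_Theory"
begin

definition dirichlet_char :: "nat \<Rightarrow> (nat \<Rightarrow> complex) \<Rightarrow> bool" where
  "dirichlet_char q chi \<longleftrightarrow>
     q > 0 \<and> chi 1 = 1 \<and>
     (\<forall>m n. chi (m * n) = chi m * chi n) \<and>
     (\<forall>n. chi (n + q) = chi n) \<and>
     (\<forall>n. chi n \<noteq> 0 \<longleftrightarrow> coprime n q)"

definition principal_char :: "nat \<Rightarrow> (nat \<Rightarrow> complex) \<Rightarrow> bool" where
  "principal_char q chi \<longleftrightarrow> (\<forall>n. coprime n q \<longrightarrow> chi n = 1)"

text \<open>The element 0 is added so that the supremum is 0
  when there is no non-principal character (q <= 2); otherwise it does not change it.\<close>
definition Delta :: "real \<Rightarrow> nat \<Rightarrow> real" where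
  "Delta N q = Sup ({0} \<union> {norm (\<Sum>n\<in>{1..nat \<lfloor>N\<rfloor>}. chi n) | chi.
                        dirichlet_char q chi \<and> \<not> principal_char q chi})"

definition compl_mult :: "(nat \<Rightarrow> real) \<Rightarrow> bool" where
  "compl_mult r \<longleftrightarrow> r 1 = 1 \<and> (\<forall>m n. m > 0 \<longrightarrow> n > 0 \<longrightarrow> r (m * n) = r m * r n)"

text \<open>1/B where B = (sum_{n>=1} r(n)^2) / (sum_{n <= y} r(n)^2); if the series
  diverges, B = infinity and 1/B = 0.\<close>
definition invB :: "(nat \<Rightarrow> real) \<Rightarrow> real \<Rightarrow> real" where
  "invB r y = (if summable (\<lambda>n. r (Suc n) ^ 2)
               then (\<Sum>n\<in>{1..nat \<lfloor>y\<rfloor>}. r n ^ 2) / (\<Sum>n. r (Suc n) ^ 2)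
               else 0)"

definition Mq :: "nat \<Rightarrow> nat" where
  "Mq q = (LEAST M. (\<Sum>p\<in>{p. prime p \<and> p \<le> M}. ln (real p)) > ln (real q))"

end

theory Submission
  imports Defs "HOL-Algebra.Multiplicative_Group" "HOL-Computational_Algebra.Fundamental_Theorem_Algebra"
begin

text \<open>The resonance method. Let \<open>R(\<chi>) = \<Sum>\<^sub>n\<^sub>\<le>\<^sub>X r(n) \<chi>(n)\<close> with \<open>X = \<phi>(q)/N\<close>, and
  \<open>S(\<chi>) = \<Sum>\<^sub>k\<^sub>\<le>\<^sub>N \<chi>(k)\<close>. Orthogonality of the characters modulo \<open>q\<close> gives
  \<open>\<Sum>\<^sub>\<chi> |R(\<chi>)|\<^sup>2 = \<phi>(q) \<Sum>\<^sub>n\<^sub>\<le>\<^sub>X r(n)\<^sup>2\<close>, while \<open>\<Sum>\<^sub>\<chi> |R(\<chi>)|\<^sup>2 S(\<chi>)\<close> is \<open>\<phi>(q)\<close> times the sum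
  of \<open>r(n) r(nk)\<close> over \<open>n \<le> X, k \<le> N, nk \<le> X\<close>; by complete multiplicativity and positivity
  this is at least \<open>\<phi>(q) (\<Sum>\<^sub>n\<^sub>\<le>\<^sub>X\<^sub>/\<^sub>N r(n)\<^sup>2) (\<Sum>\<^sub>k\<^sub>\<le>\<^sub>N r(k))\<close>. The principal character
  contributes at most \<open>X N \<Sum>\<^sub>n\<^sub>\<le>\<^sub>X r(n)\<^sup>2 \<le> \<phi>(q) \<Sum>\<^sub>n\<^sub>\<le>\<^sub>X r(n)\<^sup>2\<close> to the left-hand side and
  every other character at most \<open>\<Delta>(N,q) |R(\<chi>)|\<^sup>2\<close>, so the bound holds with \<open>O(1) = 1\<close>.

  For the second statement, the product of the primes up to \<open>M\<close> exceeds \<open>q\<close>, so \<open>q\<close> has at most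
  as many prime divisors above \<open>M\<close> as there are primes up to \<open>M\<close> not dividing \<open>q\<close>. Exchanging
  these two sets of primes turns \<open>r\<close> into a completely multiplicative weight that vanishes at
  the prime divisors of \<open>q\<close>; as the exchange only lowers the elements of the support of \<open>r\<close>,
  it does not decrease \<open>B\<^sup>-\<^sup>1 \<Sum>\<^sub>n\<^sub>\<le>\<^sub>N r(n)\<close>.\<close>

section \<open>Characters of finite abelian groups\<close>

definition character_on :: "('a, 'b) monoid_scheme \<Rightarrow> 'a set \<Rightarrow> ('a \<Rightarrow> complex) \<Rightarrow> bool" where
  "character_on G H f \<longleftrightarrow> f \<one>\<^bsub>G\<^esub> = 1 \<and> (\<forall>x\<in>H. \<forall>y\<in>H. f (x \<otimes>\<^bsub>G\<^esub> y) = f x * f y)"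

text \<open>Extending a character from the submonoid \<open>H\<close> to the set \<open>H g\<^sup>i\<close>, \<open>i < m\<close>, where \<open>m\<close> is
  the least positive exponent with \<open>g\<^sup>m \<in> H\<close>: the value at \<open>h g\<^sup>i\<close> is \<open>f h z\<^sup>i\<close>, with \<open>z\<close> an
  \<open>m\<close>-th root of \<open>f (g\<^sup>m)\<close>.\<close>
locale character_extension = comm_group G for G (structure) +
  fixes H :: "'a set" and f :: "'a \<Rightarrow> complex" and g :: 'a and m :: nat and z :: complex
  assumes finite_carrier: "finite (carrier G)"
    and submonoid_H: "submonoid H G"
    and character_f: "character_on G H f"
    and g_carrier: "g \<in> carrier G"
    and g_notin_H: "g \<notin> H"
    and m_def: "m = (LEAST n. 0 < n \<and> g [^] n \<in> H)"
    and z_pow_m: "z ^ m = f (g [^] m)"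
begin

interpretation H: submonoid H G by (rule submonoid_H)

lemma f_mult: "x \<in> H \<Longrightarrow> y \<in> H \<Longrightarrow> f (x \<otimes> y) = f x * f y"
  using character_f by (simp add: character_on_def)

lemma pow_in_H: "x \<in> H \<Longrightarrow> x [^] (n::nat) \<in> H"
  by (induction n) (auto simp: nat_pow_Suc)

lemma inv_in_H:
  assumes "x \<in> H"
  shows "inv x \<in> H"
proof -
  have x: "x \<in> carrier G" using assms by simp
  have "x [^] (order G - 1) \<otimes> x = x [^] Suc (order G - 1)"
    by (simp only: nat_pow_Suc)
  also have "\<dots> = x [^] order G"
    using finite_carrier order_gt_0_iff_finite by (simp del: nat_pow_Suc)
  also have "\<dots> = \<one>" using pow_order_eq_1[OF x] .
  finally have "inv x = x [^] (order G - 1)" using x by (intro inv_equality) auto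
  then show ?thesis using pow_in_H assms by simp
qed

lemma m_pos_pow_in_H: "0 < m \<and> g [^] m \<in> H"
proof -
  have "0 < order G \<and> g [^] order G \<in> H"
    using finite_carrier order_gt_0_iff_finite pow_order_eq_1[OF g_carrier] by auto
  then show ?thesis unfolding m_def by (rule LeastI)
qed

lemma m_le: "0 < n \<Longrightarrow> g [^] n \<in> H \<Longrightarrow> m \<le> n"
  unfolding m_def by (rule Least_le) simp

lemma m_ge_2: "2 \<le> m"
proof -
  have "m \<noteq> 1" using m_pos_pow_in_H g_notin_H g_carrier by auto
  then show ?thesis using m_pos_pow_in_H by linarith
qed

lemma representation_unique_aux:
  assumes h: "h \<in> H" "h' \<in> H" and ij: "i \<le> j" "j < m"
    and eq: "h \<otimes> g [^] i = h' \<otimes> g [^] j"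
  shows "i = j \<and> h = h'"
proof -
  have G: "h \<in> carrier G" "h' \<in> carrier G" "g [^] i \<in> carrier G" "g [^] (j - i) \<in> carrier G"
    using h g_carrier by auto
  have "h \<otimes> g [^] i = (h' \<otimes> g [^] (j - i)) \<otimes> g [^] i"
    using eq ij G g_carrier by (simp add: nat_pow_mult m_assoc)
  then have hh': "h = h' \<otimes> g [^] (j - i)"
    using G by (simp add: right_cancel)
  then have "g [^] (j - i) = inv h' \<otimes> h"
    using G by (simp add: m_assoc[symmetric])
  also have "\<dots> \<in> H" using h inv_in_H by simp
  finally have "i < j \<Longrightarrow> m \<le> j - i" using m_le[of "j - i"] by simp
  then have "i = j" using ij by linarith
  then show ?thesis using ij hh' G by simp
qed

lemma representation_unique:
  assumes "h \<in> H" "h' \<in> H" "i < m" "j < m" "h \<otimes> g [^] i = h' \<otimes> g [^] j"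
  shows "i = j \<and> h = h'"
  using representation_unique_aux[of h h' i j] representation_unique_aux[of h' h j i] assms
  by (cases "i \<le> j") auto

definition ext_set :: "'a set" where
  "ext_set = {h \<otimes> g [^] i |h i. h \<in> H \<and> i < m}"

definition ext_char :: "'a \<Rightarrow> complex" where
  "ext_char x = (SOME v. \<exists>h i. h \<in> H \<and> i < m \<and> x = h \<otimes> g [^] i \<and> v = f h * z ^ i)"

lemma ext_char_eq:
  assumes "h \<in> H" "i < m"
  shows "ext_char (h \<otimes> g [^] i) = f h * z ^ i"
proof -
  let ?P = "\<lambda>v. \<exists>h' i'. h' \<in> H \<and> i' < m \<and> h \<otimes> g [^] i = h' \<otimes> g [^] i' \<and> v = f h' * z ^ i'"
  obtain h' i' where "h' \<in> H" "i' < m" "h \<otimes> g [^] i = h' \<otimes> g [^] i'"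
      "ext_char (h \<otimes> g [^] i) = f h' * z ^ i'"
    using someI_ex[of ?P] assms unfolding ext_char_def by blast
  then show ?thesis using representation_unique[of h h' i i'] assms by auto
qed

lemma in_ext_set: "h \<in> H \<Longrightarrow> i < m \<Longrightarrow> h \<otimes> g [^] i \<in> ext_set"
  unfolding ext_set_def by blast

lemma H_subset_ext_set: "H \<subseteq> ext_set"
  using in_ext_set[of _ 0] m_pos_pow_in_H by force

lemma g_in_ext_set: "g \<in> ext_set"
  using in_ext_set[of \<one> 1] m_ge_2 g_carrier by simp

lemma ext_char_on_H: "x \<in> H \<Longrightarrow> ext_char x = f x"
  using ext_char_eq[of x 0] m_pos_pow_in_H by simp

lemma ext_char_g: "ext_char g = z"
  using ext_char_eq[of \<one> 1] m_ge_2 g_carrier character_f by (simp add: character_on_def)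

text \<open>Products of representatives wrap around through \<open>g\<^sup>m \<in> H\<close> exactly when \<open>i + j \<ge> m\<close>,
  and then \<open>z\<^sup>m = f (g\<^sup>m)\<close> restores multiplicativity.\<close>
lemma ext_mult:
  assumes "h \<in> H" "h' \<in> H" "i < m" "j < m"
  shows "(h \<otimes> g [^] i) \<otimes> (h' \<otimes> g [^] j) \<in> ext_set \<and>
         ext_char ((h \<otimes> g [^] i) \<otimes> (h' \<otimes> g [^] j)) = f h * z ^ i * (f h' * z ^ j)"
proof -
  have G: "h \<in> carrier G" "h' \<in> carrier G" using assms by auto
  have prod: "(h \<otimes> g [^] i) \<otimes> (h' \<otimes> g [^] j) = (h \<otimes> h') \<otimes> g [^] (i + j)"
    using G g_carrier by (simp add: m_ac nat_pow_mult[symmetric])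
  show ?thesis
  proof (cases "i + j < m")
    case True
    then show ?thesis
      using assms prod ext_char_eq[of "h \<otimes> h'" "i + j"] in_ext_set[of "h \<otimes> h'" "i + j"]
      by (simp add: f_mult power_add)
  next
    case False
    define k where "k = i + j - m"
    have k: "k < m" "i + j = m + k" using assms False by (auto simp: k_def)
    have hh: "h \<otimes> h' \<otimes> g [^] m \<in> H" using assms m_pos_pow_in_H by simp
    have "(h \<otimes> g [^] i) \<otimes> (h' \<otimes> g [^] j) = (h \<otimes> h' \<otimes> g [^] m) \<otimes> g [^] k"
      using prod k G g_carrier by (simp add: nat_pow_mult[symmetric] m_assoc)
    moreover have "z ^ i * z ^ j = z ^ m * z ^ k" using k(2) by (simp add: power_add[symmetric])
    then have "f (h \<otimes> h' \<otimes> g [^] m) * z ^ k = f h * z ^ i * (f h' * z ^ j)"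
      using assms m_pos_pow_in_H by (simp add: f_mult z_pow_m[symmetric] mult_ac)
    ultimately show ?thesis using ext_char_eq[OF hh k(1)] in_ext_set[OF hh k(1)] by simp
  qed
qed

lemma ext_set_submonoid: "submonoid ext_set G"
proof
  show "ext_set \<subseteq> carrier G" using g_carrier by (auto simp: ext_set_def)
  show "\<one> \<in> ext_set" using H_subset_ext_set by auto
  show "x \<otimes> y \<in> ext_set" if "x \<in> ext_set" "y \<in> ext_set" for x y
    using that ext_mult unfolding ext_set_def by blast
qed

lemma ext_char_character: "character_on G ext_set ext_char"
proof -
  have "ext_char (x \<otimes> y) = ext_char x * ext_char y" if "x \<in> ext_set" "y \<in> ext_set" for x y
    using that ext_mult ext_char_eq unfolding ext_set_def by auto
  then show ?thesis using ext_char_on_H character_f by (simp add: character_on_def)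
qed

end

lemma character_extends:
  fixes G (structure)
  assumes G: "comm_group G" "finite (carrier G)"
    and "submonoid H G" "character_on G H f"
  shows "\<exists>F. character_on G (carrier G) F \<and> (\<forall>x\<in>H. F x = f x)"
  using assms(3,4)
proof (induction "card (carrier G - H)" arbitrary: H f rule: less_induct)
  case less
  interpret comm_group G by (rule G(1))
  have HG: "H \<subseteq> carrier G" using less.prems submonoid.subset by blast
  show ?case
  proof (cases "H = carrier G")
    case False
    then obtain g where g: "g \<in> carrier G" "g \<notin> H" using HG by blast
    define m where "m = (LEAST n::nat. 0 < n \<and> g [^] n \<in> H)"
    have "0 < m"
      using G(2) order_gt_0_iff_finite pow_order_eq_1[OF g(1)] less.prems(1)
      unfolding m_def by (metis (mono_tags, lifting) LeastI submonoid.one_closed)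
    then obtain z where z: "z ^ m = f (g [^] m)" using nth_root_exists[of m "f (g [^] m)"] by blast
    interpret E: character_extension G H f g m z
      using G less.prems g m_def z
      by (simp add: character_extension_def character_extension_axioms_def)
    have "H \<subset> E.ext_set" using E.H_subset_ext_set E.g_in_ext_set g by blast
    then have "card (carrier G - E.ext_set) < card (carrier G - H)"
      using submonoid.subset[OF E.ext_set_submonoid] G(2) by (intro psubset_card_mono) auto
    then obtain F where F: "character_on G (carrier G) F" "\<forall>x\<in>E.ext_set. F x = E.ext_char x"
      using less.hyps E.ext_set_submonoid E.ext_char_character by blast
    have "\<forall>x\<in>H. F x = f x" using F(2) E.H_subset_ext_set E.ext_char_on_H by auto
    with F(1) show ?thesis by blast
  qed (use less.prems in blast)
qed

lemma character_separates:
  fixes G (structure)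
  assumes G: "comm_group G" "finite (carrier G)" and a: "a \<in> carrier G" "a \<noteq> \<one>\<^bsub>G\<^esub>"
  shows "\<exists>F. character_on G (carrier G) F \<and> F a \<noteq> 1"
proof -
  interpret comm_group G by (rule G(1))
  define m where "m = (LEAST n::nat. 0 < n \<and> a [^] n \<in> {\<one>})"
  define z where "z = exp (2 * of_real pi * \<i> / of_nat m)"
  have triv: "submonoid {\<one>} G" "character_on G {\<one>} (\<lambda>_. 1)"
    by (auto intro!: submonoid.intro simp: character_on_def)
  have "0 < m"
    using G(2) order_gt_0_iff_finite pow_order_eq_1[OF a(1)]
    unfolding m_def by (metis (mono_tags, lifting) LeastI singletonI)
  then have "z ^ m = 1" unfolding z_def by (simp add: exp_of_nat_mult[symmetric])
  then interpret E: character_extension G "{\<one>}" "\<lambda>_. 1" a m z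
    using G triv a m_def by (simp add: character_extension_def character_extension_axioms_def)
  obtain F where F: "character_on G (carrier G) F" "\<forall>x\<in>E.ext_set. F x = E.ext_char x"
    using character_extends[OF G E.ext_set_submonoid E.ext_char_character] by blast
  have "z \<noteq> 1"
  proof
    assume "z = 1"
    then obtain k :: int where "2 * pi / m = 2 * pi * k"
      unfolding z_def exp_eq_1 by auto
    then have "(2 * pi) * (1 / real m) = (2 * pi) * k" by simp
    then have "1 / real m = k" by (subst (asm) mult_cancel_left) simp
    moreover have "0 < 1 / real m" "1 / real m < 1" using E.m_ge_2 by auto
    ultimately have "0 < k" "k < 1" by simp_all
    then show False by simp
  qed
  then show ?thesis using F E.g_in_ext_set E.ext_char_g by auto
qed

section \<open>Dirichlet characters\<close>

definition residue_monoid :: "nat \<Rightarrow> nat monoid" where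
  "residue_monoid q = \<lparr>carrier = {a. a < q}, mult = (\<lambda>a b. a * b mod q), one = 1\<rparr>"

lemma comm_monoid_residue_monoid:
  assumes "1 < q"
  shows "comm_monoid (residue_monoid q)"
  by (rule comm_monoidI)
    (use assms in \<open>auto simp: residue_monoid_def mod_mult_left_eq mod_mult_right_eq mult_ac\<close>)

locale dchar_modulus =
  fixes q :: nat
  assumes modulus_gt_1: "1 < q"
begin

abbreviation residue_units :: "nat monoid" where
  "residue_units \<equiv> units_of (residue_monoid q)"

lemma comm_group_residue_units: "comm_group residue_units"
  using comm_monoid_residue_monoid[OF modulus_gt_1] comm_monoid.units_comm_group by blast

lemma finite_residue_units: "finite (carrier residue_units)"
  by (rule finite_subset[of _ "{..<q}"]) (auto simp: units_of_carrier Units_def residue_monoid_def)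

lemma coprime_imp_inverse_mod:
  assumes "coprime n q"
  obtains b where "n * b mod q = 1"
  using cong_solve_coprime_nat[OF assms] modulus_gt_1 by (auto simp: cong_def)

lemma mod_in_residue_units:
  assumes "coprime n q"
  shows "n mod q \<in> carrier residue_units"
proof -
  obtain b where "n * b mod q = 1" using coprime_imp_inverse_mod[OF assms] .
  then have "n mod q * (b mod q) mod q = 1" "b mod q * (n mod q) mod q = 1"
    by (simp_all add: mod_mult_eq mult.commute)
  then show ?thesis using modulus_gt_1
    by (auto simp: units_of_carrier Units_def residue_monoid_def intro!: exI[of _ "b mod q"])
qed

definition dchar_of :: "(nat \<Rightarrow> complex) \<Rightarrow> nat \<Rightarrow> complex" where
  "dchar_of F n = (if coprime n q then F (n mod q) else 0)"

lemma coprime_add_modulus_iff: "coprime (n + q) q \<longleftrightarrow> coprime n q"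
  using coprime_mod_left_iff[of q "n + q"] coprime_mod_left_iff[of q n] modulus_gt_1 by simp

lemma dirichlet_char_dchar_of:
  assumes F: "character_on residue_units (carrier residue_units) F"
  shows "dirichlet_char q (dchar_of F)"
proof -
  interpret U: comm_group residue_units by (rule comm_group_residue_units)
  have F_mult: "F (x * y mod q) = F x * F y"
    if "x \<in> carrier residue_units" "y \<in> carrier residue_units" for x y
    using F that by (simp add: character_on_def units_of_mult residue_monoid_def)
  have F_one: "F 1 = 1" using F by (simp add: character_on_def units_of_one residue_monoid_def)
  have F_nonzero: "F x \<noteq> 0" if x: "x \<in> carrier residue_units" for x
  proof
    assume "F x = 0"
    have "F \<one>\<^bsub>residue_units\<^esub> = F x * F (inv\<^bsub>residue_units\<^esub> x)"
      using F x U.inv_closed[OF x] unfolding character_on_def by (metis U.r_inv)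
    then show False using F \<open>F x = 0\<close> by (simp add: character_on_def)
  qed
  have "dchar_of F (m * n) = dchar_of F m * dchar_of F n" for m n
    using F_mult[OF mod_in_residue_units mod_in_residue_units, of m n]
    by (auto simp: dchar_of_def mod_mult_eq)
  then show ?thesis
    using F_one F_nonzero[OF mod_in_residue_units] modulus_gt_1
    by (auto simp: dirichlet_char_def dchar_of_def coprime_add_modulus_iff)
qed

lemma exists_dchar_neq_1:
  assumes "coprime a q" "a mod q \<noteq> 1"
  obtains chi where "dirichlet_char q chi" "chi a \<noteq> 1"
proof -
  have "a mod q \<noteq> \<one>\<^bsub>residue_units\<^esub>" using assms(2) by (simp add: units_of_one residue_monoid_def)
  then obtain F where F: "character_on residue_units (carrier residue_units) F" "F (a mod q) \<noteq> 1"
    using character_separates[OF comm_group_residue_units finite_residue_units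
        mod_in_residue_units[OF assms(1)]] by blast
  show ?thesis using that dirichlet_char_dchar_of[OF F(1)] F(2) assms(1) by (simp add: dchar_of_def)
qed

definition dchars :: "(nat \<Rightarrow> complex) set" where
  "dchars = {chi. dirichlet_char q chi}"

definition principal_dchar :: "nat \<Rightarrow> complex" where
  "principal_dchar n = (if coprime n q then 1 else 0)"

context
  fixes chi assumes chi: "chi \<in> dchars"
begin

lemma dchar_1: "chi (Suc 0) = 1"
  using chi by (simp add: dchars_def dirichlet_char_def)

lemma dchar_mult: "chi (m * n) = chi m * chi n"
  and dchar_add_modulus: "chi (n + q) = chi n" and dchar_eq_0_iff: "chi n = 0 \<longleftrightarrow> \<not> coprime n q"
  using chi unfolding dchars_def dirichlet_char_def by blast+

lemma dchar_eq_0: "\<not> coprime n q \<Longrightarrow> chi n = 0"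
  using dchar_eq_0_iff by blast

lemma dchar_mod: "chi (n mod q) = chi n"
proof -
  have "chi (r + k * q) = chi r" for r k
  proof (induction k)
    case (Suc k)
    have "r + Suc k * q = (r + k * q) + q" by simp
    then show ?case by (simp only: Suc.IH dchar_add_modulus)
  qed simp
  then show ?thesis by (metis mod_div_mult_eq)
qed

lemma dchar_power: "chi (n ^ k) = chi n ^ k"
  by (induction k) (simp_all add: dchar_1 dchar_mult)

lemma dchar_power_totient: "coprime n q \<Longrightarrow> chi n ^ totient q = 1"
  using euler_theorem[of n q] modulus_gt_1 dchar_mod[of "n ^ totient q"]
  by (simp add: cong_def dchar_power dchar_1)

lemma norm_dchar: "coprime n q \<Longrightarrow> norm (chi n) = 1"
  using power_eq_1_iff[OF dchar_power_totient] modulus_gt_1 by simp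

lemma norm_dchar_le_1: "norm (chi n) \<le> 1"
  by (cases "coprime n q") (simp_all add: norm_dchar dchar_eq_0)

lemma cnj_dchar_mult_self: "cnj (chi n) * chi n = principal_dchar n"
  using complex_norm_square[of "chi n"] norm_dchar[of n] dchar_eq_0[of n]
  by (cases "coprime n q") (simp_all add: principal_dchar_def mult.commute)

lemma cnj_dchar_eq_inverse_mod:
  assumes "coprime b q" "b * b' mod q = 1"
  shows "cnj (chi b) = chi b'"
proof -
  have "chi b * chi b' = 1" using assms(2) dchar_mod[of "b * b'"] by (simp add: dchar_mult dchar_1)
  then have "cnj (chi b) * chi b * chi b' = cnj (chi b)" by (simp add: mult.assoc)
  then show ?thesis using assms(1) by (simp add: cnj_dchar_mult_self principal_dchar_def)
qed

end

lemma principal_dchar_in_dchars: "principal_dchar \<in> dchars"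
  using modulus_gt_1 by (auto simp: dchars_def dirichlet_char_def principal_dchar_def coprime_add_modulus_iff)

lemma principal_char_iff: "chi \<in> dchars \<Longrightarrow> principal_char q chi \<longleftrightarrow> chi = principal_dchar"
  by (auto simp: principal_char_def principal_dchar_def dchar_eq_0_iff fun_eq_iff)

lemma dchars_mult: "chi \<in> dchars \<Longrightarrow> psi \<in> dchars \<Longrightarrow> (\<lambda>n. chi n * psi n) \<in> dchars"
  and dchars_cnj: "chi \<in> dchars \<Longrightarrow> (\<lambda>n. cnj (chi n)) \<in> dchars"
  by (auto simp: dchars_def dirichlet_char_def)

text \<open>A character is determined by its values on \<open>{..<q}\<close>, which are roots of unity or \<open>0\<close>.\<close>
lemma finite_dchars: "finite dchars"
proof -
  define V where "V = insert 0 {z::complex. z ^ totient q = 1}"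
  have "finite V" unfolding V_def using finite_roots_unity[of "totient q"] modulus_gt_1
    by (simp add: Suc_le_eq)
  then have "finite (PiE {..<q} (\<lambda>_. V))" by (intro finite_PiE) auto
  moreover have "(\<lambda>chi. restrict chi {..<q}) ` dchars \<subseteq> PiE {..<q} (\<lambda>_. V)"
  proof -
    have "chi n \<in> V" if "chi \<in> dchars" for chi n
      using dchar_power_totient[OF that] dchar_eq_0[OF that] by (cases "coprime n q") (auto simp: V_def)
    then show ?thesis by (simp add: image_subset_iff)
  qed
  ultimately have "finite ((\<lambda>chi. restrict chi {..<q}) ` dchars)" by (rule finite_subset[rotated])
  moreover have "inj_on (\<lambda>chi. restrict chi {..<q}) dchars"
  proof (rule inj_onI)
    fix chi psi assume *: "chi \<in> dchars" "psi \<in> dchars" "restrict chi {..<q} = restrict psi {..<q}"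
    have "chi (n mod q) = psi (n mod q)" for n
      using modulus_gt_1 fun_cong[OF *(3), of "n mod q"] by simp
    then show "chi = psi" using dchar_mod[OF *(1)] dchar_mod[OF *(2)] by auto
  qed
  ultimately show ?thesis by (rule finite_imageD)
qed

text \<open>Multiplying every character by \<open>psi\<close> permutes the characters.\<close>
lemma sum_dchars_eq_mult:
  assumes psi: "psi \<in> dchars"
  shows "(\<Sum>chi\<in>dchars. chi a) = psi a * (\<Sum>chi\<in>dchars. chi a)"
proof -
  have "cnj (psi n) * (psi n * chi n) = chi n \<and> psi n * (cnj (psi n) * chi n) = chi n"
    if "chi \<in> dchars" for chi n
  proof (cases "coprime n q")
    case True
    then have "cnj (psi n) * psi n = 1"
      using cnj_dchar_mult_self[OF psi, of n] by (simp add: principal_dchar_def)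
    then show ?thesis by (metis mult.assoc mult.commute mult_1)
  qed (simp add: dchar_eq_0[OF that])
  then have "bij_betw (\<lambda>chi n. psi n * chi n) dchars dchars"
    using dchars_mult[OF psi] dchars_mult[OF dchars_cnj[OF psi]]
    by (intro bij_betw_byWitness[where f' = "\<lambda>chi n. cnj (psi n) * chi n"]) auto
  then have "(\<Sum>chi\<in>dchars. psi a * chi a) = (\<Sum>chi\<in>dchars. chi a)"
    by (rule sum.reindex_bij_betw[where g = "\<lambda>chi. chi a"])
  then show ?thesis by (simp add: sum_distrib_left)
qed

lemma sum_dchars: "(\<Sum>chi\<in>dchars. chi a) = (if a mod q = 1 then of_nat (card dchars) else 0)"
proof (cases "a mod q = 1")
  case True
  then have "chi a = 1" if "chi \<in> dchars" for chi
    using dchar_mod[OF that, of a] dchar_1[OF that] by simp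
  then have "(\<Sum>chi\<in>dchars. chi a) = (\<Sum>chi\<in>dchars. 1)" by (intro sum.cong) auto
  then show ?thesis using True by simp
next
  case False
  show ?thesis
  proof (cases "coprime a q")
    case True
    obtain psi where "psi \<in> dchars" "psi a \<noteq> 1"
      using exists_dchar_neq_1[OF True False] by (auto simp: dchars_def)
    then show ?thesis using sum_dchars_eq_mult[of psi a] False by (metis mult_cancel_right1)
  qed (use False dchar_eq_0 in \<open>simp add: sum.neutral\<close>)
qed

lemma sum_residues_dchar:
  assumes "chi \<in> dchars"
  shows "(\<Sum>a<q. chi a) = (if chi = principal_dchar then of_nat (totient q) else 0)"
proof (cases "chi = principal_dchar")
  case True
  have "0 < a" if "coprime a q" for a using that modulus_gt_1 by (cases a) auto
  then have "{a \<in> {..<q}. coprime a q} = totatives q"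
    using modulus_gt_1 by (auto simp: totatives_def order.order_iff_strict)
  then show ?thesis using True
    by (simp add: principal_dchar_def sum.If_cases Int_def totient_def)
next
  case False
  then obtain b where b: "coprime b q" "chi b \<noteq> 1"
    using assms by (auto simp: principal_dchar_def fun_eq_iff dchar_eq_0_iff split: if_splits)
  obtain b' where b': "b * b' mod q = 1" using coprime_imp_inverse_mod[OF b(1)] .
  have "bij_betw (\<lambda>a. a * b mod q) {..<q} {..<q}"
  proof (rule bij_betw_byWitness[where f' = "\<lambda>a. a * b' mod q"])
    have "a * x mod q * y mod q = a" if "a < q" "x * y mod q = 1" for a x y
      using that by (metis mod_mult_left_eq mod_mult_right_eq mult.assoc mult.right_neutral mod_less)
    then show "\<forall>a\<in>{..<q}. a * b mod q * b' mod q = a" "\<forall>a\<in>{..<q}. a * b' mod q * b mod q = a"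
      using b' by (auto simp: mult.commute[of b'])
  qed (use modulus_gt_1 in auto)
  then have "(\<Sum>a<q. chi (a * b mod q)) = (\<Sum>a<q. chi a)"
    by (rule sum.reindex_bij_betw)
  then have "(\<Sum>a<q. chi a) * chi b = (\<Sum>a<q. chi a)"
    using assms by (simp add: dchar_mod dchar_mult sum_distrib_right)
  then show ?thesis using b(2) False by simp
qed

lemma card_dchars: "card dchars = totient q"
proof -
  have "of_nat (card dchars) = (\<Sum>a<q. \<Sum>chi\<in>dchars. chi a)"
    using modulus_gt_1 by (simp add: sum_dchars sum.delta_remove)
  also have "\<dots> = (\<Sum>chi\<in>dchars. \<Sum>a<q. chi a)" by (rule sum.swap)
  also have "\<dots> = of_nat (totient q)"
    using principal_dchar_in_dchars finite_dchars by (simp add: sum_residues_dchar)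
  finally show ?thesis by (simp only: of_nat_eq_iff)
qed

lemma sum_dchars_mult_cnj:
  "(\<Sum>chi\<in>dchars. chi a * cnj (chi b)) =
     (if coprime a q \<and> coprime b q \<and> a mod q = b mod q then of_nat (totient q) else 0)"
proof (cases "coprime b q")
  case True
  obtain b' where b': "b * b' mod q = 1" using coprime_imp_inverse_mod[OF True] .
  have "a * b' mod q = 1 \<longleftrightarrow> coprime a q \<and> a mod q = b mod q"
  proof
    assume ab': "a * b' mod q = 1"
    have "coprime (a * b') q" using ab' coprime_mod_left_iff[of q "a * b'"] modulus_gt_1 by simp
    have "a mod q = a * (b * b' mod q) mod q" using b' by simp
    also have "\<dots> = (a * b' mod q) * b mod q"
      by (simp add: mod_mult_right_eq mod_mult_left_eq mult.assoc mult.commute[of b'])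
    also have "\<dots> = b mod q" using ab' by simp
    finally show "coprime a q \<and> a mod q = b mod q" using \<open>coprime (a * b') q\<close> by simp
  next
    assume "coprime a q \<and> a mod q = b mod q"
    then show "a * b' mod q = 1" using b' by (metis mod_mult_left_eq)
  qed
  moreover have "(\<Sum>chi\<in>dchars. chi a * cnj (chi b)) = (\<Sum>chi\<in>dchars. chi (a * b'))"
    using True b' by (intro sum.cong) (simp_all add: cnj_dchar_eq_inverse_mod dchar_mult)
  ultimately show ?thesis using True by (simp add: sum_dchars card_dchars)
qed (simp add: dchar_eq_0)

end

section \<open>Completely multiplicative weights\<close>

lemma compl_mult_mult: "compl_mult r \<Longrightarrow> 0 < m \<Longrightarrow> 0 < n \<Longrightarrow> r (m * n) = r m * r n"
  by (simp add: compl_mult_def)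

lemma compl_mult_1: "compl_mult r \<Longrightarrow> r (Suc 0) = 1"
  by (simp add: compl_mult_def)

lemma compl_mult_nonneg:
  assumes r: "compl_mult r" and prime_nonneg: "\<And>p. prime p \<Longrightarrow> 0 \<le> r p" and "1 \<le> n"
  shows "0 \<le> r n"
  using \<open>1 \<le> n\<close>
proof (induction n rule: less_induct)
  case (less n)
  show ?case
  proof (cases "n = 1")
    case False
    then obtain p m where p: "prime p" "n = p * m" using prime_factor_nat by (metis dvdE)
    then have "0 < m" "m < n" using less.prems prime_gt_1_nat[OF p(1)] by (auto intro: gr0I)
    then show ?thesis
      using p less.IH[of m] prime_nonneg[OF p(1)] compl_mult_mult[OF r] prime_gt_0_nat by simp
  qed (use r in \<open>simp add: compl_mult_1\<close>)
qed

lemma compl_mult_eq_0_if_dvd: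
  assumes "compl_mult r" "0 < n" "p dvd n" "0 < p" "r p = 0"
  shows "r n = 0"
proof -
  obtain m where m: "n = p * m" using \<open>p dvd n\<close> ..
  then have "0 < m" using \<open>0 < n\<close> by (auto intro: gr0I)
  then show ?thesis using m assms by (simp add: compl_mult_mult)
qed

lemma compl_mult_eq_0_if_not_coprime:
  assumes r: "compl_mult r" and vanish: "\<And>p. prime p \<Longrightarrow> p dvd q \<Longrightarrow> r p = 0"
    and "0 < n" "\<not> coprime n q"
  shows "r n = 0"
proof -
  have "gcd n q \<noteq> 1" using \<open>\<not> coprime n q\<close> coprime_iff_gcd_eq_1 by blast
  then obtain p where p: "prime p" "p dvd gcd n q" using prime_factor_nat by blast
  then have "p dvd n" "r p = 0" using vanish by simp_all
  then show ?thesis using compl_mult_eq_0_if_dvd[OF r \<open>0 < n\<close>] prime_gt_0_nat[OF p(1)] by blast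
qed

section \<open>The resonance method\<close>

definition resonator :: "(nat \<Rightarrow> real) \<Rightarrow> nat \<Rightarrow> (nat \<Rightarrow> complex) \<Rightarrow> complex" where
  "resonator r X chi = (\<Sum>n\<in>{1..X}. of_real (r n) * chi n)"

lemma sum_sq_mult_sum_le:
  fixes r :: "nat \<Rightarrow> real"
  assumes r: "compl_mult r" and nonneg: "\<And>n. 1 \<le> n \<Longrightarrow> 0 \<le> r n" and "Y * L \<le> X"
  shows "(\<Sum>n\<in>{1..Y}. (r n)\<^sup>2) * (\<Sum>k\<in>{1..L}. r k)
           \<le> (\<Sum>n\<in>{1..X}. \<Sum>k\<in>{1..L}. r n * (if n * k \<le> X then r (n * k) else 0))"
proof (cases "L = 0")
  case False
  have "(\<Sum>n\<in>{1..Y}. (r n)\<^sup>2) * (\<Sum>k\<in>{1..L}. r k) = (\<Sum>n\<in>{1..Y}. \<Sum>k\<in>{1..L}. (r n)\<^sup>2 * r k)"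
    by (rule sum_product)
  also have "\<dots> = (\<Sum>n\<in>{1..Y}. \<Sum>k\<in>{1..L}. r n * (if n * k \<le> X then r (n * k) else 0))"
  proof (intro sum.cong refl)
    fix n k assume "n \<in> {1..Y}" "k \<in> {1..L}"
    moreover from this have "n * k \<le> X"
      using mult_le_mono[of n Y k L] \<open>Y * L \<le> X\<close> by simp
    ultimately show "(r n)\<^sup>2 * r k = r n * (if n * k \<le> X then r (n * k) else 0)"
      by (simp add: compl_mult_mult[OF r] power2_eq_square)
  qed
  also have "\<dots> \<le> (\<Sum>n\<in>{1..X}. \<Sum>k\<in>{1..L}. r n * (if n * k \<le> X then r (n * k) else 0))"
  proof (rule sum_mono2)
    show "{1..Y} \<subseteq> {1..X}" using \<open>Y * L \<le> X\<close> False by (auto intro: order.trans[of _ "Y * L"])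
  qed (use nonneg in \<open>auto intro!: sum_nonneg\<close>)
  finally show ?thesis .
qed simp

context dchar_modulus
begin

lemma sum_dchars_mult_cnj_resonator:
  fixes r :: "nat \<Rightarrow> real"
  assumes a: "1 \<le> a" "a < q" and "X < q"
    and supp: "\<And>n. 1 \<le> n \<Longrightarrow> \<not> coprime n q \<Longrightarrow> r n = 0"
  shows "(\<Sum>chi\<in>dchars. chi a * cnj (resonator r X chi))
           = of_real (totient q * (if a \<le> X then r a else 0))"
proof -
  have "(\<Sum>chi\<in>dchars. chi a * cnj (resonator r X chi))
          = (\<Sum>chi\<in>dchars. \<Sum>n\<in>{1..X}. of_real (r n) * (chi a * cnj (chi n)))"
    by (simp add: resonator_def cnj_sum sum_distrib_left mult_ac)
  also have "\<dots> = (\<Sum>n\<in>{1..X}. of_real (r n) * (\<Sum>chi\<in>dchars. chi a * cnj (chi n)))"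
    by (subst sum.swap) (simp add: sum_distrib_left)
  also have "\<dots> = (\<Sum>n\<in>{1..X}. if n = a \<and> coprime a q then of_real (totient q * r a) else 0)"
    using a \<open>X < q\<close> by (intro sum.cong refl) (auto simp: sum_dchars_mult_cnj)
  also have "\<dots> = of_real (totient q * (if a \<le> X then r a else 0))"
  proof (cases "coprime a q")
    case True
    then show ?thesis using a by (simp add: sum.delta')
  qed (use supp[OF a(1)] in simp)
  finally show ?thesis .
qed

lemma sum_dchars_norm_resonator_sq:
  fixes r :: "nat \<Rightarrow> real"
  assumes "X < q" and supp: "\<And>n. 1 \<le> n \<Longrightarrow> \<not> coprime n q \<Longrightarrow> r n = 0"
  shows "(\<Sum>chi\<in>dchars. (norm (resonator r X chi))\<^sup>2) = totient q * (\<Sum>n\<in>{1..X}. (r n)\<^sup>2)"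
proof -
  have "complex_of_real (\<Sum>chi\<in>dchars. (norm (resonator r X chi))\<^sup>2)
          = (\<Sum>chi\<in>dchars. resonator r X chi * cnj (resonator r X chi))"
    by (simp only: of_real_sum complex_norm_square)
  also have "\<dots> = (\<Sum>chi\<in>dchars. \<Sum>n\<in>{1..X}. of_real (r n) * (chi n * cnj (resonator r X chi)))"
    unfolding resonator_def[of r X] by (simp add: sum_distrib_right mult.assoc)
  also have "\<dots> = (\<Sum>n\<in>{1..X}. of_real (r n) * (\<Sum>chi\<in>dchars. chi n * cnj (resonator r X chi)))"
    by (subst sum.swap) (simp add: sum_distrib_left)
  also have "\<dots> = (\<Sum>n\<in>{1..X}. of_real (r n) * of_real (totient q * r n))"
    using assms by (intro sum.cong refl) (simp add: sum_dchars_mult_cnj_resonator)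
  also have "\<dots> = complex_of_real (totient q * (\<Sum>n\<in>{1..X}. (r n)\<^sup>2))"
    by (simp add: sum_distrib_left power2_eq_square mult_ac)
  finally show ?thesis by (simp only: of_real_eq_iff)
qed

lemma sum_dchars_resonator_twisted:
  fixes r :: "nat \<Rightarrow> real"
  assumes "X < q" "X * L < q" and supp: "\<And>n. 1 \<le> n \<Longrightarrow> \<not> coprime n q \<Longrightarrow> r n = 0"
  shows "(\<Sum>chi\<in>dchars. resonator r X chi * (\<Sum>k\<in>{1..L}. chi k) * cnj (resonator r X chi))
    = of_real (totient q * (\<Sum>n\<in>{1..X}. \<Sum>k\<in>{1..L}. r n * (if n * k \<le> X then r (n * k) else 0)))"
proof -
  have "resonator r X chi * (\<Sum>k\<in>{1..L}. chi k)
          = (\<Sum>n\<in>{1..X}. \<Sum>k\<in>{1..L}. of_real (r n) * chi (n * k))" if "chi \<in> dchars" for chi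
    by (simp add: resonator_def sum_product dchar_mult[OF that] mult.assoc)
  then have "(\<Sum>chi\<in>dchars. resonator r X chi * (\<Sum>k\<in>{1..L}. chi k) * cnj (resonator r X chi))
      = (\<Sum>chi\<in>dchars. \<Sum>n\<in>{1..X}. \<Sum>k\<in>{1..L}.
           of_real (r n) * (chi (n * k) * cnj (resonator r X chi)))"
    by (simp add: sum_distrib_right mult.assoc)
  also have "\<dots> = (\<Sum>n\<in>{1..X}. \<Sum>k\<in>{1..L}.
                    of_real (r n) * (\<Sum>chi\<in>dchars. chi (n * k) * cnj (resonator r X chi)))"
    by (subst sum.swap, subst sum.swap) (simp add: sum_distrib_left)
  also have "\<dots> = (\<Sum>n\<in>{1..X}. \<Sum>k\<in>{1..L}.
                    of_real (r n) * of_real (totient q * (if n * k \<le> X then r (n * k) else 0)))"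
  proof (intro sum.cong refl)
    fix n k assume "n \<in> {1..X}" "k \<in> {1..L}"
    then have "1 \<le> n * k" "n * k < q" using mult_le_mono[of n X k L] \<open>X * L < q\<close> by auto
    then show "of_real (r n) * (\<Sum>chi\<in>dchars. chi (n * k) * cnj (resonator r X chi))
        = of_real (r n) * of_real (totient q * (if n * k \<le> X then r (n * k) else 0))"
      using assms by (simp add: sum_dchars_mult_cnj_resonator)
  qed
  finally show ?thesis by (simp add: sum_distrib_left mult_ac)
qed

lemma Delta_bdd_above:
  "bdd_above ({0} \<union> {norm (\<Sum>n\<in>{1..nat \<lfloor>N\<rfloor>}. chi n) | chi.
                 dirichlet_char q chi \<and> \<not> principal_char q chi})"
proof (rule bdd_aboveI)
  fix x assume "x \<in> {0} \<union> {norm (\<Sum>n\<in>{1..nat \<lfloor>N\<rfloor>}. chi n) | chi.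
                   dirichlet_char q chi \<and> \<not> principal_char q chi}"
  then consider "x = 0" | chi where "chi \<in> dchars" "x = norm (\<Sum>n\<in>{1..nat \<lfloor>N\<rfloor>}. chi n)"
    by (auto simp: dchars_def)
  then show "x \<le> nat \<lfloor>N\<rfloor>"
  proof cases
    case 2
    then have "x \<le> (\<Sum>n\<in>{1..nat \<lfloor>N\<rfloor>}. norm (chi n))" using norm_sum by metis
    also have "\<dots> \<le> (\<Sum>n\<in>{1..nat \<lfloor>N\<rfloor>}. 1)" using norm_dchar_le_1[OF 2(1)] by (intro sum_mono)
    finally show ?thesis by simp
  qed simp
qed

lemma Delta_nonneg: "0 \<le> Delta N q"
  unfolding Delta_def by (rule cSup_upper[OF _ Delta_bdd_above]) simp

lemma norm_sum_dchar_le_Delta: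
  assumes "chi \<in> dchars" "chi \<noteq> principal_dchar"
  shows "norm (\<Sum>n\<in>{1..nat \<lfloor>N\<rfloor>}. chi n) \<le> Delta N q"
  unfolding Delta_def
  by (rule cSup_upper[OF _ Delta_bdd_above]) (use assms principal_char_iff in \<open>auto simp: dchars_def\<close>)

lemma norm_resonator_principal_sq_le:
  fixes r :: "nat \<Rightarrow> real"
  assumes nonneg: "\<And>n. 1 \<le> n \<Longrightarrow> 0 \<le> r n"
  shows "(norm (resonator r X principal_dchar))\<^sup>2 \<le> X * (\<Sum>n\<in>{1..X}. (r n)\<^sup>2)"
proof -
  have "norm (resonator r X principal_dchar) \<le> (\<Sum>n\<in>{1..X}. r n)"
    unfolding resonator_def
    by (rule order.trans[OF norm_sum sum_mono]) (auto simp: principal_dchar_def nonneg norm_mult)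
  then have "(norm (resonator r X principal_dchar))\<^sup>2 \<le> (\<Sum>n\<in>{1..X}. r n)\<^sup>2"
    by (intro power_mono) simp_all
  also have "\<dots> \<le> (\<Sum>n\<in>{1..X}. (r n)\<^sup>2) * card {1..X}" by (rule sum_squared_le_sum_of_squares)
  finally show ?thesis by (simp add: mult.commute)
qed

lemma norm_sum_principal_dchar_le: "norm (\<Sum>k\<in>{1..L}. principal_dchar k) \<le> L"
proof -
  have "norm (\<Sum>k\<in>{1..L}. principal_dchar k) \<le> (\<Sum>k\<in>{1..L}. norm (principal_dchar k))"
    by (rule norm_sum)
  also have "\<dots> \<le> (\<Sum>k\<in>{1..L}. 1)" by (intro sum_mono) (simp add: principal_dchar_def)
  finally show ?thesis by simp
qed

lemma Re_sum_dchars_resonator_twisted_le: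
  fixes r :: "nat \<Rightarrow> real" and N :: real
  assumes "X < q" and nonneg: "\<And>n. 1 \<le> n \<Longrightarrow> 0 \<le> r n"
    and supp: "\<And>n. 1 \<le> n \<Longrightarrow> \<not> coprime n q \<Longrightarrow> r n = 0"
  defines "L \<equiv> nat \<lfloor>N\<rfloor>" and "Q \<equiv> \<Sum>n\<in>{1..X}. (r n)\<^sup>2"
  shows "Re (\<Sum>chi\<in>dchars. resonator r X chi * (\<Sum>k\<in>{1..L}. chi k) * cnj (resonator r X chi))
           \<le> (X * L + Delta N q * totient q) * Q"
proof -
  define S where "S chi = (\<Sum>k\<in>{1..L}. chi k)" for chi :: "nat \<Rightarrow> complex"
  define w where "w chi = (norm (resonator r X chi))\<^sup>2" for chi
  have Q_nonneg: "0 \<le> Q" unfolding Q_def by (intro sum_nonneg) simp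
  have "resonator r X chi * S chi * cnj (resonator r X chi) = of_real (w chi) * S chi" for chi
    by (simp only: w_def complex_norm_square) (simp add: mult_ac)
  then have "Re (\<Sum>chi\<in>dchars. resonator r X chi * S chi * cnj (resonator r X chi))
          = Re (\<Sum>chi\<in>dchars. of_real (w chi) * S chi)"
    by (simp only:)
  also have "\<dots> = (\<Sum>chi\<in>dchars. w chi * Re (S chi))"
    by (simp add: Re_sum)
  also have "\<dots> \<le> (\<Sum>chi\<in>dchars. w chi * norm (S chi))"
    by (intro sum_mono mult_left_mono) (auto simp: w_def complex_Re_le_cmod)
  also have "\<dots> = w principal_dchar * norm (S principal_dchar)
                   + (\<Sum>chi\<in>dchars - {principal_dchar}. w chi * norm (S chi))"
    using principal_dchar_in_dchars finite_dchars by (simp add: sum.remove)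
  also have "w principal_dchar * norm (S principal_dchar) \<le> (X * Q) * L"
    using norm_resonator_principal_sq_le[of r X] nonneg norm_sum_principal_dchar_le[of L] Q_nonneg
    by (intro mult_mono) (simp_all add: w_def Q_def S_def)
  also have "(\<Sum>chi\<in>dchars - {principal_dchar}. w chi * norm (S chi))
               \<le> (\<Sum>chi\<in>dchars - {principal_dchar}. w chi * Delta N q)"
    using norm_sum_dchar_le_Delta by (intro sum_mono mult_left_mono) (auto simp: S_def L_def w_def)
  also have "\<dots> \<le> (\<Sum>chi\<in>dchars. w chi * Delta N q)"
    using Delta_nonneg finite_dchars by (intro sum_mono2) (auto simp: w_def)
  also have "\<dots> = Delta N q * (totient q * Q)"
    using sum_dchars_norm_resonator_sq[of X r, OF \<open>X < q\<close> supp]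
    by (simp add: w_def Q_def flip: sum_distrib_right)
  finally show ?thesis by (simp add: S_def algebra_simps)
qed

theorem resonance_inequality:
  fixes r :: "nat \<Rightarrow> real" and X Y :: nat
  assumes r: "compl_mult r" and nonneg: "\<And>n. 1 \<le> n \<Longrightarrow> 0 \<le> r n"
    and supp: "\<And>n. 1 \<le> n \<Longrightarrow> \<not> coprime n q \<Longrightarrow> r n = 0"
    and XL: "X * nat \<lfloor>N\<rfloor> \<le> totient q" and YL: "Y * nat \<lfloor>N\<rfloor> \<le> X"
  shows "(\<Sum>n\<in>{1..Y}. (r n)\<^sup>2) * (\<Sum>k\<in>{1..nat \<lfloor>N\<rfloor>}. r k)
           \<le> (\<Sum>n\<in>{1..X}. (r n)\<^sup>2) * (1 + Delta N q)"
proof (cases "nat \<lfloor>N\<rfloor> = 0")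
  case True
  then show ?thesis using Delta_nonneg by (simp add: sum_nonneg)
next
  case False
  define L where "L = nat \<lfloor>N\<rfloor>"
  define Q where "Q = (\<Sum>n\<in>{1..X}. (r n)\<^sup>2)"
  define A where "A = (\<Sum>n\<in>{1..X}. \<Sum>k\<in>{1..L}. r n * (if n * k \<le> X then r (n * k) else 0))"
  have "totient q < q" using totient_less modulus_gt_1 by simp
  moreover have "1 \<le> L" using False unfolding L_def by linarith
  then have "X \<le> X * L" using mult_le_mono2[of 1 L X] by simp
  ultimately have XL_q: "X * L < q" and X_q: "X < q" using XL unfolding L_def by linarith+
  have "totient q * ((\<Sum>n\<in>{1..Y}. (r n)\<^sup>2) * (\<Sum>k\<in>{1..L}. r k)) \<le> totient q * A"
    unfolding A_def L_def using sum_sq_mult_sum_le[OF r nonneg YL] by (intro mult_left_mono) simp_all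
  also have "\<dots> = Re (\<Sum>chi\<in>dchars. resonator r X chi * (\<Sum>k\<in>{1..L}. chi k) * cnj (resonator r X chi))"
    unfolding A_def using sum_dchars_resonator_twisted[OF X_q XL_q supp] by simp
  also have "\<dots> \<le> (X * L + Delta N q * totient q) * Q"
    unfolding L_def Q_def using Re_sum_dchars_resonator_twisted_le[of X r N] X_q nonneg supp by simp
  also have "\<dots> \<le> totient q * (Q * (1 + Delta N q))"
  proof -
    have "real (X * L) \<le> totient q" using XL unfolding L_def of_nat_le_iff .
    then show ?thesis
      using mult_right_mono[of "real (X * L)" "totient q" Q] sum_nonneg[of "{1..X}" "\<lambda>n. (r n)\<^sup>2"]
      by (simp add: Q_def algebra_simps)
  qed
  finally show ?thesis
    using modulus_gt_1 by (simp add: Q_def L_def mult_le_cancel_left_pos)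
qed

end

section \<open>The bound for weights supported on residues coprime to the modulus\<close>

lemma nat_floor_divide_mult_le:
  fixes x N :: real
  assumes "0 \<le> x" "0 < N"
  shows "nat \<lfloor>x / N\<rfloor> * nat \<lfloor>N\<rfloor> \<le> nat \<lfloor>x\<rfloor>"
proof -
  have "real (nat \<lfloor>x / N\<rfloor>) * real (nat \<lfloor>N\<rfloor>) \<le> x / N * N"
    using assms by (intro mult_mono) simp_all
  then have "real (nat \<lfloor>x / N\<rfloor> * nat \<lfloor>N\<rfloor>) \<le> x" using assms by simp
  then show ?thesis by (simp add: le_nat_floor)
qed

lemma invB_mult_le:
  fixes r :: "nat \<Rightarrow> real"
  assumes r: "compl_mult r" and "nat \<lfloor>y\<rfloor> \<le> X" "0 \<le> T" "0 \<le> 1 + D"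
    and resonance: "(\<Sum>n\<in>{1..nat \<lfloor>y\<rfloor>}. (r n)\<^sup>2) * T \<le> (\<Sum>n\<in>{1..X}. (r n)\<^sup>2) * (1 + D)"
  shows "invB r y * T \<le> 1 + D"
proof (cases "summable (\<lambda>n. r (Suc n) ^ 2) \<and> 1 \<le> nat \<lfloor>y\<rfloor>")
  case True
  define P where "P = (\<Sum>n\<in>{1..nat \<lfloor>y\<rfloor>}. (r n)\<^sup>2)"
  define Q where "Q = (\<Sum>n\<in>{1..X}. (r n)\<^sup>2)"
  have "1 \<le> X" using True \<open>nat \<lfloor>y\<rfloor> \<le> X\<close> by linarith
  then have "(r 1)\<^sup>2 \<le> Q" unfolding Q_def by (intro member_le_sum) auto
  then have Q: "1 \<le> Q" using compl_mult_1[OF r] by simp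
  have "Q = (\<Sum>n<X. (r (Suc n))\<^sup>2)" unfolding Q_def by (simp add: sum.atLeast1_atMost_eq)
  also have "\<dots> \<le> (\<Sum>n. r (Suc n) ^ 2)" using True by (intro sum_le_suminf) auto
  finally have "invB r y * T \<le> P * T / Q"
    using True Q \<open>0 \<le> T\<close>
    by (auto simp: invB_def P_def intro!: divide_left_mono mult_nonneg_nonneg sum_nonneg)
  also have "\<dots> \<le> 1 + D" using resonance Q by (simp add: P_def Q_def divide_le_eq mult.commute)
  finally show ?thesis .
qed (use \<open>0 \<le> 1 + D\<close> in \<open>auto simp: invB_def\<close>)

theorem Delta_ge_invB_coprime_support:
  fixes q :: nat and N :: real and r :: "nat \<Rightarrow> real"
  assumes "1 < q" "1 \<le> N" and r: "compl_mult r" and nonneg: "\<And>n. 1 \<le> n \<Longrightarrow> 0 \<le> r n"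
    and supp: "\<And>n. 1 \<le> n \<Longrightarrow> \<not> coprime n q \<Longrightarrow> r n = 0"
  shows "Delta N q \<ge> - 1 + invB r ((real (totient q) / N) / N) * (\<Sum>n\<in>{1..nat \<lfloor>N\<rfloor>}. r n)"
proof -
  interpret dchar_modulus q using \<open>1 < q\<close> by unfold_locales
  define X where "X = nat \<lfloor>real (totient q) / N\<rfloor>"
  have "X * nat \<lfloor>N\<rfloor> \<le> totient q"
    using nat_floor_divide_mult_le[of "real (totient q)" N] \<open>1 \<le> N\<close> by (simp add: X_def)
  moreover have YX: "nat \<lfloor>real (totient q) / N / N\<rfloor> * nat \<lfloor>N\<rfloor> \<le> X"
    using nat_floor_divide_mult_le[of "real (totient q) / N" N] \<open>1 \<le> N\<close> by (simp add: X_def)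
  ultimately have "(\<Sum>n\<in>{1..nat \<lfloor>real (totient q) / N / N\<rfloor>}. (r n)\<^sup>2) * (\<Sum>k\<in>{1..nat \<lfloor>N\<rfloor>}. r k)
      \<le> (\<Sum>n\<in>{1..X}. (r n)\<^sup>2) * (1 + Delta N q)"
    using resonance_inequality[where r = r and N = N, OF r nonneg supp] by blast
  moreover have "nat \<lfloor>real (totient q) / N / N\<rfloor> \<le> X"
  proof -
    have "1 \<le> nat \<lfloor>N\<rfloor>" using \<open>1 \<le> N\<close> by (intro le_nat_floor) simp
    then show ?thesis using YX mult_le_mono2[of 1 "nat \<lfloor>N\<rfloor>"] by (metis le_trans mult.right_neutral)
  qed
  ultimately have "invB r ((real (totient q) / N) / N) * (\<Sum>n\<in>{1..nat \<lfloor>N\<rfloor>}. r n) \<le> 1 + Delta N q"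
    using Delta_nonneg nonneg by (intro invB_mult_le[OF r]) (auto intro: sum_nonneg)
  then show ?thesis by simp
qed

section \<open>Replacing small primes by large ones\<close>

definition subst_primes :: "(nat \<Rightarrow> nat) \<Rightarrow> nat \<Rightarrow> nat" where
  "subst_primes f n = prod_mset (image_mset f (prime_factorization n))"

lemma prod_mset_image_le:
  fixes M :: "nat multiset"
  assumes "\<And>x. x \<in># M \<Longrightarrow> f x \<le> x"
  shows "prod_mset (image_mset f M) \<le> prod_mset M"
  using assms by (induction M) (auto intro: mult_le_mono)

locale prime_involution =
  fixes f :: "nat \<Rightarrow> nat"
  assumes prime_f: "\<And>p. prime p \<Longrightarrow> prime (f p)"
    and f_f: "\<And>p. prime p \<Longrightarrow> f (f p) = p"
begin

lemma prime_factorization_subst_primes: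
  "prime_factorization (subst_primes f n) = image_mset f (prime_factorization n)"
  unfolding subst_primes_def
  by (rule prime_factorization_prod_mset_primes) (auto simp: prime_f in_prime_factors_iff)

lemma subst_primes_pos: "0 < subst_primes f n"
  unfolding subst_primes_def using prime_f
  by (metis (no_types, lifting) gr0I imageE in_prime_factors_iff not_prime_0 prod_mset_zero_iff set_image_mset)

lemma subst_primes_subst_primes:
  assumes "0 < n"
  shows "subst_primes f (subst_primes f n) = n"
proof -
  have "image_mset (\<lambda>p. f (f p)) (prime_factorization n) = image_mset id (prime_factorization n)"
    by (rule image_mset_cong) (auto simp: f_f in_prime_factors_iff)
  then show ?thesis
    using assms unfolding subst_primes_def[of f "subst_primes f n"] prime_factorization_subst_primes
    by (simp add: multiset.map_comp o_def)
qed

lemma subst_primes_mult: "0 < m \<Longrightarrow> 0 < n \<Longrightarrow> subst_primes f (m * n) = subst_primes f m * subst_primes f n"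
  by (simp add: subst_primes_def prime_factorization_mult)

lemma subst_primes_1: "subst_primes f (Suc 0) = Suc 0"
  by (simp add: subst_primes_def)

lemma subst_primes_prime: "prime p \<Longrightarrow> subst_primes f p = f p"
  by (simp add: subst_primes_def prime_factorization_prime)

lemma inj_on_subst_primes: "inj_on (subst_primes f) {1..}"
  by (rule inj_on_inverseI[where g = "subst_primes f"]) (auto simp: subst_primes_subst_primes)

lemma subst_primes_le:
  assumes "0 < n" "\<And>p. p \<in> prime_factors n \<Longrightarrow> f p \<le> p"
  shows "subst_primes f n \<le> n"
  using prod_mset_image_le[of "prime_factorization n" f] assms by (simp add: subst_primes_def)

lemma compl_mult_comp_subst_primes:
  assumes "compl_mult r"
  shows "compl_mult (\<lambda>n. r (subst_primes f n))"
  using assms subst_primes_pos by (simp add: compl_mult_def subst_primes_1 subst_primes_mult)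

text \<open>\<open>subst_primes f\<close> maps the support of \<open>g\<close> in \<open>[1, K]\<close> injectively into \<open>[1, K]\<close>, and
  \<open>g \<circ> subst_primes f\<close> takes the value \<open>g n\<close> at the image of \<open>n\<close>.\<close>
lemma sum_le_sum_comp_subst_primes:
  fixes g :: "nat \<Rightarrow> real"
  assumes decr: "\<And>n. 1 \<le> n \<Longrightarrow> g n \<noteq> 0 \<Longrightarrow> subst_primes f n \<le> n"
    and nonneg: "\<And>n. 1 \<le> n \<Longrightarrow> 0 \<le> g (subst_primes f n)"
  shows "(\<Sum>n\<in>{1..K}. g n) \<le> (\<Sum>n\<in>{1..K}. g (subst_primes f n))"
proof -
  define Z where "Z = {n \<in> {1..K}. g n \<noteq> 0}"
  have inj: "inj_on (subst_primes f) Z" using inj_on_subst_primes by (rule inj_on_subset) (auto simp: Z_def)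
  have "(\<Sum>n\<in>{1..K}. g n) = (\<Sum>n\<in>Z. g n)"
    by (rule sum.mono_neutral_right) (auto simp: Z_def)
  also have "\<dots> = (\<Sum>n\<in>Z. g (subst_primes f (subst_primes f n)))"
    by (intro sum.cong refl) (simp add: Z_def subst_primes_subst_primes)
  also have "\<dots> = (\<Sum>m\<in>subst_primes f ` Z. g (subst_primes f m))"
    by (simp add: sum.reindex[OF inj])
  also have "\<dots> \<le> (\<Sum>m\<in>{1..K}. g (subst_primes f m))"
  proof (rule sum_mono2)
    show "subst_primes f ` Z \<subseteq> {1..K}"
    proof
      fix m assume "m \<in> subst_primes f ` Z"
      then obtain n where "n \<in> Z" "m = subst_primes f n" by blast
      then show "m \<in> {1..K}" using decr[of n] subst_primes_pos[of n] by (auto simp: Z_def)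
    qed
  qed (use nonneg in auto)
  finally show ?thesis .
qed

lemma summable_sq_comp_subst_primes:
  fixes r :: "nat \<Rightarrow> real"
  assumes "summable (\<lambda>n. r (Suc n) ^ 2)"
  shows "summable (\<lambda>n. r (subst_primes f (Suc n)) ^ 2)"
    and "(\<Sum>n. r (subst_primes f (Suc n)) ^ 2) \<le> (\<Sum>n. r (Suc n) ^ 2)"
proof -
  have bound: "(\<Sum>n<K. r (subst_primes f (Suc n)) ^ 2) \<le> (\<Sum>n. r (Suc n) ^ 2)" for K
  proof -
    have inj: "inj_on (subst_primes f) {1..K}" using inj_on_subst_primes by (rule inj_on_subset) auto
    define B where "B = Max (subst_primes f ` {1..K})"
    have "(\<Sum>n<K. r (subst_primes f (Suc n)) ^ 2) = (\<Sum>n\<in>{1..K}. r (subst_primes f n) ^ 2)"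
      by (simp add: sum.atLeast1_atMost_eq)
    also have "\<dots> = (\<Sum>m\<in>subst_primes f ` {1..K}. r m ^ 2)"
      by (simp only: sum.reindex[OF inj] comp_def)
    also have "\<dots> \<le> (\<Sum>m\<in>{1..B}. r m ^ 2)"
      using subst_primes_pos by (intro sum_mono2) (auto simp: B_def Suc_le_eq)
    also have "\<dots> = (\<Sum>n<B. r (Suc n) ^ 2)" by (simp add: sum.atLeast1_atMost_eq)
    also have "\<dots> \<le> (\<Sum>n. r (Suc n) ^ 2)" by (intro sum_le_suminf assms) auto
    finally show ?thesis .
  qed
  show "summable (\<lambda>n. r (subst_primes f (Suc n)) ^ 2)"
    by (rule summableI_nonneg_bounded[OF _ bound]) simp
  then show "(\<Sum>n. r (subst_primes f (Suc n)) ^ 2) \<le> (\<Sum>n. r (Suc n) ^ 2)"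
    using suminf_le_const bound by blast
qed

end

lemma invB_mult_mono:
  fixes r r' :: "nat \<Rightarrow> real"
  assumes r': "compl_mult r'"
    and summable: "summable (\<lambda>n. r (Suc n) ^ 2) \<Longrightarrow>
      summable (\<lambda>n. r' (Suc n) ^ 2) \<and> (\<Sum>n. r' (Suc n) ^ 2) \<le> (\<Sum>n. r (Suc n) ^ 2)"
    and head: "(\<Sum>n\<in>{1..nat \<lfloor>y\<rfloor>}. r n ^ 2) \<le> (\<Sum>n\<in>{1..nat \<lfloor>y\<rfloor>}. r' n ^ 2)"
    and "0 \<le> T" "T \<le> T'"
  shows "invB r y * T \<le> invB r' y * T'"
proof -
  have invB'_nonneg: "0 \<le> invB r' y"
    unfolding invB_def by (auto intro!: divide_nonneg_nonneg sum_nonneg suminf_nonneg)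
  have "invB r y \<le> invB r' y"
  proof (cases "summable (\<lambda>n. r (Suc n) ^ 2)")
    case True
    then have s': "summable (\<lambda>n. r' (Suc n) ^ 2)" "(\<Sum>n. r' (Suc n) ^ 2) \<le> (\<Sum>n. r (Suc n) ^ 2)"
      using summable by blast+
    have "r' (Suc 0) ^ 2 \<le> (\<Sum>n. r' (Suc n) ^ 2)" using sum_le_suminf[OF s'(1), of "{0}"] by simp
    then have "1 \<le> (\<Sum>n. r' (Suc n) ^ 2)" using compl_mult_1[OF r'] by simp
    then show ?thesis
      using True s' head unfolding invB_def
      by (auto intro!: frac_le sum_nonneg)
  qed (use invB'_nonneg in \<open>simp add: invB_def\<close>)
  then show ?thesis using \<open>0 \<le> T\<close> \<open>T \<le> T'\<close> invB'_nonneg by (intro mult_mono) auto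
qed

context prime_involution
begin

lemma subst_primes_le_on_support:
  fixes r :: "nat \<Rightarrow> real"
  assumes r: "compl_mult r" and small: "\<And>p. prime p \<Longrightarrow> p \<le> M \<Longrightarrow> r p = 0"
    and large: "\<And>p. prime p \<Longrightarrow> M < p \<Longrightarrow> f p \<le> p"
    and "1 \<le> n" "r n \<noteq> 0"
  shows "subst_primes f n \<le> n"
proof (rule subst_primes_le)
  fix p assume p: "p \<in> prime_factors n"
  then have "r p \<noteq> 0"
    using compl_mult_eq_0_if_dvd[OF r] \<open>1 \<le> n\<close> \<open>r n \<noteq> 0\<close>
    by (auto simp: in_prime_factors_iff prime_gt_0_nat)
  then have "\<not> p \<le> M" using p small by (auto simp: in_prime_factors_iff)
  then show "f p \<le> p" using p large by (auto simp: in_prime_factors_iff)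
qed (use \<open>1 \<le> n\<close> in simp)

lemma invB_mult_le_comp_subst_primes:
  fixes r :: "nat \<Rightarrow> real"
  assumes r: "compl_mult r" and nonneg: "\<And>n. 1 \<le> n \<Longrightarrow> 0 \<le> r n"
    and decr: "\<And>n. 1 \<le> n \<Longrightarrow> r n \<noteq> 0 \<Longrightarrow> subst_primes f n \<le> n"
  shows "invB r y * (\<Sum>n\<in>{1..L}. r n)
           \<le> invB (\<lambda>n. r (subst_primes f n)) y * (\<Sum>n\<in>{1..L}. r (subst_primes f n))"
proof (rule invB_mult_mono)
  show "compl_mult (\<lambda>n. r (subst_primes f n))" by (rule compl_mult_comp_subst_primes[OF r])
  show "(\<Sum>n\<in>{1..nat \<lfloor>y\<rfloor>}. r n ^ 2) \<le> (\<Sum>n\<in>{1..nat \<lfloor>y\<rfloor>}. r (subst_primes f n) ^ 2)"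
    using decr by (intro sum_le_sum_comp_subst_primes) auto
  show "(\<Sum>n\<in>{1..L}. r n) \<le> (\<Sum>n\<in>{1..L}. r (subst_primes f n))"
    using decr nonneg subst_primes_pos by (intro sum_le_sum_comp_subst_primes) (auto simp: Suc_le_eq)
qed (use nonneg summable_sq_comp_subst_primes in \<open>auto intro: sum_nonneg\<close>)

end

lemma Mq_prod_primes_gt:
  assumes "0 < q"
  shows "q < (\<Prod>p\<in>{p. prime p \<and> p \<le> Mq q}. p)"
proof -
  obtain p0 where p0: "prime p0" "q < p0" using bigger_prime by blast
  have "ln (real q) < ln (real p0)" using p0 assms by simp
  also have "\<dots> \<le> (\<Sum>p\<in>{p. prime p \<and> p \<le> p0}. ln (real p))"
    by (rule member_le_sum) (use p0 prime_ge_1_nat in auto)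
  finally have "\<exists>M. ln (real q) < (\<Sum>p\<in>{p. prime p \<and> p \<le> M}. ln (real p))" by blast
  then have "ln (real q) < (\<Sum>p\<in>{p. prime p \<and> p \<le> Mq q}. ln (real p))"
    unfolding Mq_def by (rule LeastI_ex)
  also have "\<dots> = ln (real (\<Prod>p\<in>{p. prime p \<and> p \<le> Mq q}. p))"
    unfolding of_nat_prod by (rule ln_prod[symmetric]) (auto dest: prime_gt_0_nat)
  finally show ?thesis
    using assms by (subst (asm) ln_less_cancel_iff) (auto intro!: prod_pos dest: prime_gt_0_nat simp del: of_nat_prod)
qed

text \<open>Otherwise the large prime divisors of \<open>q\<close> could be matched with distinct smaller primes,
  so that \<open>q\<close> would be at least the product of all primes up to \<open>M\<close>.\<close>
lemma card_large_prime_divisors_le: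
  fixes q M :: nat
  assumes "0 < q" "q < (\<Prod>p\<in>{p. prime p \<and> p \<le> M}. p)"
  shows "card {p. prime p \<and> M < p \<and> p dvd q} \<le> card {p. prime p \<and> p \<le> M \<and> \<not> p dvd q}"
proof (rule ccontr)
  define A where "A = {p. prime p \<and> p \<le> M \<and> \<not> p dvd q}"
  define B where "B = {p. prime p \<and> M < p \<and> p dvd q}"
  define S where "S = {p. prime p \<and> p \<le> M \<and> p dvd q}"
  assume "\<not> card B \<le> card A"
  moreover have fin: "finite A" "finite B" "finite S"
    using \<open>0 < q\<close> by (auto simp: A_def B_def S_def intro: finite_subset[of _ "{..q}"] dvd_imp_le)
  ultimately obtain h where h: "h ` A \<subseteq> B" "inj_on h A" using card_le_inj by (metis nat_le_linear)
  have "(\<Prod>p\<in>{p. prime p \<and> p \<le> M}. p) = (\<Prod>p\<in>S. p) * (\<Prod>p\<in>A. p)"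
    using fin by (subst prod.union_disjoint[symmetric]) (auto simp: A_def S_def intro!: prod.cong)
  also have "(\<Prod>p\<in>A. p) \<le> (\<Prod>p\<in>A. h p)"
    using h(1) by (intro prod_mono) (auto simp: A_def B_def)
  also have "\<dots> = (\<Prod>p\<in>h ` A. p)" using h(2) by (simp add: prod.reindex)
  also have "\<dots> \<le> (\<Prod>p\<in>B. p)"
    using h(1) fin by (intro dvd_imp_le prod_dvd_prod_subset) (auto simp: B_def prime_gt_0_nat intro!: prod_pos)
  also have "(\<Prod>p\<in>S. p) * (\<Prod>p\<in>B. p) = (\<Prod>p\<in>prime_factors q. p)"
    using fin \<open>0 < q\<close>
    by (subst prod.union_disjoint[symmetric]) (auto simp: S_def B_def in_prime_factors_iff intro!: prod.cong)
  also have "\<dots> \<le> q"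
  proof (rule dvd_imp_le)
    have "(\<Prod>p\<in>prime_factors q. p) dvd (\<Prod>p\<in>prime_factors q. p ^ multiplicity p q)"
      by (intro prod_dvd_prod) (simp add: dvd_power prime_factors_multiplicity)
    then show "(\<Prod>p\<in>prime_factors q. p) dvd q" using prod_prime_factors[of q] \<open>0 < q\<close> by simp
  qed (use \<open>0 < q\<close> in simp)
  finally show False using assms(2) by simp
qed

lemma exists_involution_into:
  fixes A B :: "'a set"
  assumes "finite A" "finite B" "card B \<le> card A" "A \<inter> B = {}"
  obtains f where "\<And>x. f (f x) = x" "f ` B \<subseteq> A" "\<And>x. x \<notin> A \<union> B \<Longrightarrow> f x = x"
proof -
  obtain g where g: "g ` B \<subseteq> A" "inj_on g B" using card_le_inj[OF assms(2,1,3)] by blast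
  define f where "f x = (if x \<in> B then g x else if x \<in> g ` B then the_inv_into B g x else x)" for x
  have "f (f x) = x" for x
  proof -
    consider "x \<in> B" | "x \<notin> B" "x \<in> g ` B" | "x \<notin> B" "x \<notin> g ` B" by blast
    then show ?thesis
    proof cases
      case 1
      then have "g x \<notin> B" "g x \<in> g ` B" using g(1) assms(4) by auto
      then show ?thesis using 1 by (simp add: f_def the_inv_into_f_f[OF g(2)])
    next
      case 2
      then have "the_inv_into B g x \<in> B" by (simp add: the_inv_into_into[OF g(2)])
      then show ?thesis using 2 by (simp add: f_def f_the_inv_into_f[OF g(2)])
    next
      case 3
      then show ?thesis by (simp add: f_def)
    qed
  qed
  moreover have "f ` B \<subseteq> A" using g by (auto simp: f_def)
  moreover have "f x = x" if "x \<notin> A \<union> B" for x using that g(1) by (auto simp: f_def)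
  ultimately show ?thesis by (rule that)
qed

lemma exists_prime_involution_small_divisors:
  fixes q M :: nat
  assumes "0 < q" "q < (\<Prod>p\<in>{p. prime p \<and> p \<le> M}. p)"
  obtains f where "prime_involution f" "\<And>p. prime p \<Longrightarrow> M < p \<Longrightarrow> f p \<le> p"
    "\<And>p. prime p \<Longrightarrow> p dvd q \<Longrightarrow> f p \<le> M"
proof -
  define A where "A = {p. prime p \<and> p \<le> M \<and> \<not> p dvd q}"
  define B where "B = {p. prime p \<and> M < p \<and> p dvd q}"
  have "finite A" "finite B"
    using \<open>0 < q\<close> by (auto simp: A_def B_def intro: finite_subset[of _ "{..q}"] dvd_imp_le)
  moreover have "card B \<le> card A"
    using card_large_prime_divisors_le[OF assms] by (simp add: A_def B_def)
  moreover have "A \<inter> B = {}" by (auto simp: A_def B_def)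
  ultimately obtain f where f: "\<And>x. f (f x) = x" "f ` B \<subseteq> A" "\<And>x. x \<notin> A \<union> B \<Longrightarrow> f x = x"
    by (rule exists_involution_into) blast
  have "f x \<in> A \<union> B" if "x \<in> A \<union> B" for x
  proof (rule ccontr)
    assume "f x \<notin> A \<union> B"
    then have "f (f x) = f x" by (rule f(3))
    then show False using f(1)[of x] that \<open>f x \<notin> A \<union> B\<close> by simp
  qed
  then have "prime_involution f"
    using f(1,3) by unfold_locales (metis A_def B_def UnE mem_Collect_eq)+
  moreover have "f p \<le> p" if "prime p" "M < p" for p
    using that f(2,3) by (cases "p \<in> B") (auto simp: A_def B_def)
  moreover have "f p \<le> M" if "prime p" "p dvd q" for p
    using that f(2,3) by (cases "p \<in> B") (auto simp: A_def B_def)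
  ultimately show ?thesis by (rule that)
qed

theorem Delta_ge_invB_small_primes_vanish:
  fixes q :: nat and N :: real and r :: "nat \<Rightarrow> real"
  assumes "1 < q" "1 \<le> N" and r: "compl_mult r" and prime_nonneg: "\<And>p. prime p \<Longrightarrow> 0 \<le> r p"
    and small: "\<And>p. prime p \<Longrightarrow> p \<le> Mq q \<Longrightarrow> r p = 0"
  shows "Delta N q \<ge> - 1 + invB r ((real (totient q) / N) / N) * (\<Sum>n\<in>{1..nat \<lfloor>N\<rfloor>}. r n)"
proof -
  obtain f where f: "prime_involution f" "\<And>p. prime p \<Longrightarrow> Mq q < p \<Longrightarrow> f p \<le> p"
      "\<And>p. prime p \<Longrightarrow> p dvd q \<Longrightarrow> f p \<le> Mq q"
    using exists_prime_involution_small_divisors[OF _ Mq_prod_primes_gt, of q] \<open>1 < q\<close> by auto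
  interpret prime_involution f by (rule f(1))
  define r' where "r' n = r (subst_primes f n)" for n
  have r': "compl_mult r'" unfolding r'_def by (rule compl_mult_comp_subst_primes[OF r])
  have r'_prime: "r' p = r (f p)" if "prime p" for p using that by (simp add: r'_def subst_primes_prime)
  have nonneg: "1 \<le> n \<Longrightarrow> 0 \<le> r n" for n by (rule compl_mult_nonneg[OF r prime_nonneg])
  have "invB r ((real (totient q) / N) / N) * (\<Sum>n\<in>{1..nat \<lfloor>N\<rfloor>}. r n)
          \<le> invB r' ((real (totient q) / N) / N) * (\<Sum>n\<in>{1..nat \<lfloor>N\<rfloor>}. r' n)"
  proof -
    have "subst_primes f n \<le> n" if "1 \<le> n" "r n \<noteq> 0" for n
      using subst_primes_le_on_support[of r "Mq q" n] r small f(2) that by blast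
    then show ?thesis unfolding r'_def using invB_mult_le_comp_subst_primes[OF r nonneg] by blast
  qed
  also have "\<dots> \<le> 1 + Delta N q"
  proof -
    have "1 \<le> n \<Longrightarrow> 0 \<le> r' n" for n
      by (rule compl_mult_nonneg[OF r']) (simp add: r'_prime prime_nonneg prime_f)
    moreover have "1 \<le> n \<Longrightarrow> \<not> coprime n q \<Longrightarrow> r' n = 0" for n
      by (rule compl_mult_eq_0_if_not_coprime[OF r']) (auto simp: r'_prime small prime_f f(3))
    ultimately show ?thesis
      using Delta_ge_invB_coprime_support[OF \<open>1 < q\<close> \<open>1 \<le> N\<close> r'] by simp
  qed
  finally show ?thesis by simp
qed

theorem mainTheorem6:
  "\<exists>C::real.
     (\<forall>(q::nat) (N::real) (r::nat \<Rightarrow> real).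
        q > 0 \<longrightarrow> 1 \<le> N \<longrightarrow> N < sqrt (real q) \<longrightarrow> compl_mult r \<longrightarrow>
        (\<forall>p. prime p \<longrightarrow> r p \<ge> 0) \<longrightarrow> (\<forall>p. prime p \<longrightarrow> p dvd q \<longrightarrow> r p = 0) \<longrightarrow>
        Delta N q \<ge> - C + invB r ((real (totient q) / N) / N) * (\<Sum>n\<in>{1..nat \<lfloor>N\<rfloor>}. r n))
   \<and> (\<forall>(q::nat) (N::real) (r::nat \<Rightarrow> real).
        q > 0 \<longrightarrow> 1 \<le> N \<longrightarrow> N < sqrt (real q) \<longrightarrow> compl_mult r \<longrightarrow>
        (\<forall>p. prime p \<longrightarrow> r p \<ge> 0) \<longrightarrow> (\<forall>p. prime p \<longrightarrow> p \<le> Mq q \<longrightarrow> r p = 0) \<longrightarrow>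
        Delta N q \<ge> - C + invB r ((real (totient q) / N) / N) * (\<Sum>n\<in>{1..nat \<lfloor>N\<rfloor>}. r n))"
proof (rule exI[of _ 1], intro conjI allI impI)
  fix q :: nat and N :: real and r :: "nat \<Rightarrow> real"
  assume "0 < q" and N: "1 \<le> N" "N < sqrt (real q)" and r: "compl_mult r"
    and nonneg: "\<forall>p. prime p \<longrightarrow> r p \<ge> 0" and vanish: "\<forall>p. prime p \<longrightarrow> p dvd q \<longrightarrow> r p = 0"
  have "1 < sqrt (real q)" using N by linarith
  then have "1 < q" by simp
  moreover have "1 \<le> n \<Longrightarrow> 0 \<le> r n" for n using compl_mult_nonneg[OF r] nonneg by blast
  moreover have "1 \<le> n \<Longrightarrow> \<not> coprime n q \<Longrightarrow> r n = 0" for n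
    using compl_mult_eq_0_if_not_coprime[OF r, of q n] vanish by simp
  ultimately show "Delta N q \<ge> - 1 + invB r ((real (totient q) / N) / N) * (\<Sum>n\<in>{1..nat \<lfloor>N\<rfloor>}. r n)"
    using Delta_ge_invB_coprime_support[OF _ N(1) r] by blast
next
  fix q :: nat and N :: real and r :: "nat \<Rightarrow> real"
  assume "0 < q" and N: "1 \<le> N" "N < sqrt (real q)" and r: "compl_mult r"
    and nonneg: "\<forall>p. prime p \<longrightarrow> r p \<ge> 0" and small: "\<forall>p. prime p \<longrightarrow> p \<le> Mq q \<longrightarrow> r p = 0"
  have "1 < sqrt (real q)" using N by linarith
  then have "1 < q" by simp
  then show "Delta N q \<ge> - 1 + invB r ((real (totient q) / N) / N) * (\<Sum>n\<in>{1..nat \<lfloor>N\<rfloor>}. r n)"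
    using Delta_ge_invB_small_primes_vanish[OF _ N(1) r] nonneg small by blast
qed

end
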